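(* Let $U\le B$ be positive integers, $P>0$, $\mathbf{H}\in\mathbb{C}^{U\times B}$, and $\mathbf{s}\in\mathbb{C}^U$ with $\mathbf{s}\neq\mathbf{0}$. Set $$\mathbf{Q}=\mathbf{I}_U-\frac{\mathbf{s}\mathbf{s}^H}{\|\mathbf{s}\|_2^2},\qquad \mathbf{A}=\mathbf{Q}\mathbf{H}\in\mathbb{C}^{U\times B},$$ let $\ell=\sqrt{P/(2B)}$ and $$\mathcal{B}^B=\{\mathbf{c}\in\mathbb{C}^B:\ |\mathrm{Re}\{c_b\}|\le \ell,\ |\mathrm{Im}\{c_b\}|\le \ell,\ b=1,\dots,B\}.$$ Let $\delta>0$ and a step size $\tau>0$ satisfy $\tau<\|\mathbf{A}^H\mathbf{A}\|_{2,2}^{-1}$ and $\tau\delta<1$. Consider the objective $$F(\mathbf{x})=\tfrac12\|\mathbf{A}\mathbf{x}\|_2^2-\tfrac{\delta}{2}\|\mathbf{x}\|_2^2+\chi(\mathbf{x}\in\mathcal{B}^B),$$ i.e. the problem $\min_{\mathbf{x}\in\mathcal{B}^B}\tfrac12\|\mathbf{A}\mathbf{x}\|_2^2-\tfrac{\delta}{2}\|\mathbf{x}\|_2^2$. Define the sequence (algorithm C2PO) by $\mathbf{x}^{(1)}=\mathbf{H}^H\mathbf{s}$ and, for $t=1,2,\dots$, $$\mathbf{z}^{(t+1)}=\mathbf{x}^{(t)}-\tau\mathbf{A}^H\mathbf{A}\mathbf{x}^{(t)},\qquad \mathbf{x}^{(t+1)}=\mathrm{prox}_g(\mathbf{z}^{(t+1)};\tau),$$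 where $\mathrm{prox}_g$ acts entrywise as $$\mathrm{prox}_g(z)=\mathrm{sgn}(\mathrm{Re}\{z\})\min\Big\{\tfrac{1}{1-\tau\delta}|\mathrm{Re}\{z\}|,\ \ell\Big\}+j\,\mathrm{sgn}(\mathrm{Im}\{z\})\min\Big\{\tfrac{1}{1-\tau\delta}|\mathrm{Im}\{z\}|,\ \ell\Big\}.$$ Then C2PO decreases the objective monotonically, i.e. $F(\mathbf{x}^{(t+1)})\le F(\mathbf{x}^{(t)})$ for all $t$, and any limit point of the iterates $\{\mathbf{x}^{(t)}\}$ is a stationary point of this problem.
   Context: $\chi(\mathbf{x}\in\mathcal{B}^B)$ equals $0$ if $\mathbf{x}\in\mathcal{B}^B$ and $+\infty$ otherwise. $\|\cdot\|_{2,2}$ is the spectral (matrix $\ell_2$) norm. $\mathrm{sgn}(a)=+1$ for $a\ge0$ and $-1$ for $a<0$; $j$ is the imaginary unit. Complex vectors are identified with real vectors of twice the dimension, with real inner product $\mathrm{Re}\{\mathbf{u}^H\mathbf{v}\}$. Writing $f(\mathbf{x})=\tfrac12\|\mathbf{A}\mathbf{x}\|_2^2$ and $g(\mathbf{x})=\chi(\mathbf{x}\in\mathcal{B}^B)-\tfrac{\delta}{2}\|\mathbf{x}\|_2^2$, a stationary point is a point $\mathbf{x}^\star\in\mathcal{B}^B$ with $0\in\partial g(\mathbf{x}^\star)+\nabla f(\mathbf{x}^\star)$, equivalently $-(\mathbf{A}^H\mathbf{A}\mathbf{x}^\star-\delta\mathbf{x}^\star)$ lies in the normal cone of $\mathcal{B}^B$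 at $\mathbf{x}^\star$. *)

theory Defs
  imports "HOL-Analysis.Analysis"
begin

definition cadj :: "complex ^ 'n ^ 'm \<Rightarrow> complex ^ 'm ^ 'n" where
  "cadj M = (\<chi> i j. cnj (M $ j $ i))"

definition cinner :: "complex ^ 'n \<Rightarrow> complex ^ 'n \<Rightarrow> real" where
  "cinner u v = Re (\<Sum>i\<in>UNIV. cnj (u $ i) * v $ i)"

definition projQ :: "complex ^ 'u \<Rightarrow> complex ^ 'u ^ 'u" where
  "projQ s = mat 1 - (\<chi> i j. s $ i * cnj (s $ j) / complex_of_real ((norm s)\<^sup>2))"

definition cbox_set :: "real \<Rightarrow> (complex ^ 'b) set" where
  "cbox_set l = {c. \<forall>b. \<bar>Re (c $ b)\<bar> \<le> l \<and> \<bar>Im (c $ b)\<bar> \<le> l}"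

definition sgnp :: "real \<Rightarrow> real" where
  "sgnp a = (if a \<ge> 0 then 1 else -1)"

definition prox_scalar :: "real \<Rightarrow> real \<Rightarrow> real \<Rightarrow> complex \<Rightarrow> complex" where
  "prox_scalar tau delta l z =
     Complex (sgnp (Re z) * min (\<bar>Re z\<bar> / (1 - tau * delta)) l)
             (sgnp (Im z) * min (\<bar>Im z\<bar> / (1 - tau * delta)) l)"

definition prox_g :: "real \<Rightarrow> real \<Rightarrow> real \<Rightarrow> complex ^ 'b \<Rightarrow> complex ^ 'b" where
  "prox_g tau delta l z = (\<chi> b. prox_scalar tau delta l (z $ b))"

definition objF :: "complex ^ 'b ^ 'u \<Rightarrow> real \<Rightarrow> real \<Rightarrow> complex ^ 'b \<Rightarrow> ereal" where
  "objF A delta l x = (if x \<in> cbox_set l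
      then ereal ((norm (A *v x))\<^sup>2 / 2 - delta / 2 * (norm x)\<^sup>2) else \<infinity>)"

text \<open>Stationary point: x in the box and -(A^H A x - delta x) lies in the normal cone of the box at x.\<close>
definition stationary :: "complex ^ 'b ^ 'u \<Rightarrow> real \<Rightarrow> real \<Rightarrow> complex ^ 'b \<Rightarrow> bool" where
  "stationary A delta l x \<longleftrightarrow> x \<in> cbox_set l \<and>
     (\<forall>y\<in>cbox_set l. cinner (- ((cadj A ** A) *v x - delta *\<^sub>R x)) (y - x) \<le> 0)"

end

theory Submission
  imports Defs
begin

text \<open>C2PO is the proximal-gradient method for \<open>\<parallel>A x\<parallel>\<^sup>2/2\<close> plus the nonconvex term
  \<open>g = \<chi>(box) - \<delta>\<parallel>x\<parallel>\<^sup>2/2\<close>. Its proximal step clamps \<open>z / (1 - \<tau>\<delta>)\<close> to the box, which is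
  exactly the minimizer of \<open>(1 - \<tau>\<delta>) \<parallel>q\<parallel>\<^sup>2 - 2 q \<bullet> z\<close> over the box. Comparing this minimizer
  with the current iterate yields the sufficient decrease
  \<open>F(x\<^sup>+) \<le> F(x) - (1 - \<tau>\<parallel>A\<^sup>H A\<parallel>) / (2\<tau>) \<parallel>x\<^sup>+ - x\<parallel>\<^sup>2\<close>. Since \<open>F\<close> is bounded below on the
  box, successive differences tend to \<open>0\<close>, so along a convergent subsequence the next iterates
  have the same limit, and the first-order optimality condition of the proximal step passes
  to the limit as stationarity.

  Only \<open>0 < P\<close>, \<open>0 < \<tau>\<close> and the two step-size bounds are needed: the argument works for any
  matrix \<open>A\<close> and any starting point, the iterates lying in the box from \<open>t = 2\<close> on.\<close>

section \<open>Complex vectors as a real inner product space\<close>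

lemma cinner_eq_inner: "cinner u v = u \<bullet> v"
  unfolding cinner_def inner_vec_def inner_complex_def
  by (simp add: Re_sum)

lemma inner_vec_complex:
  "(u::complex^'n) \<bullet> v = (\<Sum>b\<in>UNIV. Re (u$b) * Re (v$b) + Im (u$b) * Im (v$b))"
  by (simp add: inner_vec_def inner_complex_def)

lemma norm_power2_vec_complex:
  "(norm (v::complex^'n))\<^sup>2 = (\<Sum>b\<in>UNIV. (Re (v$b))\<^sup>2 + (Im (v$b))\<^sup>2)"
  unfolding power2_norm_eq_inner inner_vec_complex by (simp add: power2_eq_square)

lemma inner_matrix_vector_cadj: "(A *v u) \<bullet> w = u \<bullet> (cadj A *v w)"
proof -
  have "(\<Sum>i\<in>UNIV. cnj ((A *v u) $ i) * w $ i)
      = (\<Sum>i\<in>UNIV. \<Sum>j\<in>UNIV. cnj (A$i$j) * cnj (u$j) * w$i)"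
    unfolding matrix_vector_mult_def by (simp add: sum_distrib_right)
  also have "\<dots> = (\<Sum>j\<in>UNIV. \<Sum>i\<in>UNIV. cnj (A$i$j) * cnj (u$j) * w$i)"
    by (rule sum.swap)
  also have "\<dots> = (\<Sum>j\<in>UNIV. cnj (u $ j) * (cadj A *v w) $ j)"
    unfolding matrix_vector_mult_def cadj_def by (simp add: sum_distrib_left mult_ac)
  finally show ?thesis unfolding cinner_eq_inner[symmetric] cinner_def by simp
qed

lemma vector_smult_of_real: "complex_of_real t *s (v::complex^'n) = t *\<^sub>R v"
  unfolding vec_eq_iff vector_scaleR_component vector_smult_component
  by (simp add: scaleR_conv_of_real)

lemma norm_matrix_vector_add_power2:
  "(norm (A *v (x + d)))\<^sup>2
     = (norm (A *v x))\<^sup>2 + 2 * (d \<bullet> ((cadj A ** A) *v x)) + d \<bullet> ((cadj A ** A) *v d)"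
proof -
  have "(A *v x) \<bullet> (A *v d) = d \<bullet> ((cadj A ** A) *v x)"
    by (simp add: inner_commute inner_matrix_vector_cadj matrix_vector_mul_assoc[symmetric])
  moreover have "(norm (A *v d))\<^sup>2 = d \<bullet> ((cadj A ** A) *v d)"
    by (simp add: power2_norm_eq_inner inner_matrix_vector_cadj matrix_vector_mul_assoc[symmetric])
  ultimately show ?thesis
    by (simp add: matrix_vector_right_distrib power2_norm_eq_inner inner_add inner_commute)
qed

lemma inner_le_onorm_mult_power2:
  fixes f :: "'a::real_inner \<Rightarrow> 'a"
  assumes "bounded_linear f"
  shows "d \<bullet> f d \<le> onorm f * (norm d)\<^sup>2"
proof -
  have "d \<bullet> f d \<le> norm d * norm (f d)" by (rule norm_cauchy_schwarz)
  also have "\<dots> \<le> norm d * (onorm f * norm d)"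
    by (rule mult_left_mono[OF onorm[OF assms]]) simp
  finally show ?thesis by (simp add: power2_eq_square mult_ac)
qed

lemma convex_cbox_set: "convex (cbox_set l :: (complex^'b) set)"
proof (rule convexI)
  have abs_le: "\<bar>u * p + v * q\<bar> \<le> l" if "\<bar>p\<bar> \<le> l" "\<bar>q\<bar> \<le> l" "0 \<le> u" "0 \<le> v" "u + v = 1"
    for p q u v :: real
    using convex_bound_le[of p l q u v] convex_bound_le[of "-p" l "-q" u v] that
    unfolding abs_le_iff by auto
  fix x y :: "complex^'b" and u v :: real
  assume "x \<in> cbox_set l" "y \<in> cbox_set l" "0 \<le> u" "0 \<le> v" "u + v = 1"
  then show "u *\<^sub>R x + v *\<^sub>R y \<in> cbox_set l"
    unfolding cbox_set_def by (auto intro!: abs_le)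
qed

lemma closed_cbox_set: "closed (cbox_set l :: (complex^'b) set)"
proof -
  have "cbox_set l = (\<Inter>b. {c::complex^'b. \<bar>Re (c$b)\<bar> \<le> l} \<inter> {c. \<bar>Im (c$b)\<bar> \<le> l})"
    unfolding cbox_set_def by auto
  moreover have "closed {c::complex^'b. \<bar>Re (c$b)\<bar> \<le> l}" "closed {c::complex^'b. \<bar>Im (c$b)\<bar> \<le> l}"
    for b by (intro closed_Collect_le continuous_intros)+
  ultimately show ?thesis by (simp add: closed_INT closed_Int)
qed

lemma norm_power2_le_if_in_cbox_set:
  assumes "v \<in> cbox_set l"
  shows "(norm (v::complex^'b))\<^sup>2 \<le> real CARD('b) * (2 * l\<^sup>2)"
proof -
  have "(Re (v$b))\<^sup>2 + (Im (v$b))\<^sup>2 \<le> 2 * l\<^sup>2" for b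
  proof -
    have "\<bar>Re (v$b)\<bar> \<le> l" "\<bar>Im (v$b)\<bar> \<le> l" using assms unfolding cbox_set_def by auto
    moreover from this have "0 \<le> l" by linarith
    ultimately show ?thesis by (simp add: power2_le_iff_abs_le[symmetric])
  qed
  then show ?thesis
    unfolding norm_power2_vec_complex
    using sum_bounded_above[of UNIV "\<lambda>b. (Re (v$b))\<^sup>2 + (Im (v$b))\<^sup>2" "2 * l\<^sup>2"] by simp
qed

section \<open>The proximal map\<close>

lemma sgnp_mult_min_eq_clamp:
  assumes "0 < k" "0 \<le> l"
  shows "sgnp a * min (\<bar>a\<bar> / k) l = max (- l) (min (a / k) l)"
proof (cases "0 \<le> a")
  case True
  then have "0 \<le> a / k" using assms(1) by simp
  with True assms(2) show ?thesis by (simp add: sgnp_def min_def max_def)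
next
  case False
  then have "a / k < 0" using assms(1) by (simp add: divide_neg_pos)
  with False assms(2) show ?thesis by (simp add: sgnp_def min_def max_def)
qed

text \<open>The clamped value is the projection of \<open>a / k\<close> onto \<open>[-l, l]\<close>, and
  \<open>k u\<^sup>2 - 2 u a = k (u - a / k)\<^sup>2 - a\<^sup>2 / k\<close>.\<close>

lemma clamp_minimizes:
  fixes a u k l :: real
  assumes "0 < k" "\<bar>u\<bar> \<le> l"
  defines "p \<equiv> max (- l) (min (a / k) l)"
  shows "k * p\<^sup>2 - 2 * p * a \<le> k * u\<^sup>2 - 2 * u * a"
proof -
  have "\<bar>p - a / k\<bar> \<le> \<bar>u - a / k\<bar>" using assms(2) unfolding p_def by linarith
  then have "k * (p - a / k)\<^sup>2 \<le> k * (u - a / k)\<^sup>2"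
    using assms(1) by (simp add: abs_le_square_iff)
  moreover have "k * (w - a / k)\<^sup>2 = k * w\<^sup>2 - 2 * w * a + a\<^sup>2 / k" for w
    using assms(1) by (simp add: power2_eq_square field_simps)
  ultimately show ?thesis by simp
qed

lemma prox_g_in_cbox_set:
  assumes "0 < 1 - tau * delta" "0 \<le> l"
  shows "prox_g tau delta l z \<in> cbox_set l"
  using assms by (auto simp: cbox_set_def prox_g_def prox_scalar_def sgnp_mult_min_eq_clamp abs_le_iff)

lemma prox_g_minimizes:
  fixes z :: "complex^'b"
  assumes "0 < 1 - tau * delta" "y \<in> cbox_set l"
  defines "q \<equiv> prox_g tau delta l z"
  shows "(1 - tau * delta) * (norm q)\<^sup>2 - 2 * (q \<bullet> z)
       \<le> (1 - tau * delta) * (norm y)\<^sup>2 - 2 * (y \<bullet> z)"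
proof -
  define k where "k = 1 - tau * delta"
  have y: "\<bar>Re (y$b)\<bar> \<le> l" "\<bar>Im (y$b)\<bar> \<le> l" for b
    using assms(2) unfolding cbox_set_def by auto
  then have "0 \<le> l" by force
  then have q: "max (- l) (min (Re (z$b) / k) l) = Re (q$b)"
               "max (- l) (min (Im (z$b) / k) l) = Im (q$b)" for b
    unfolding q_def k_def prox_g_def prox_scalar_def using assms(1)
    by (simp_all add: sgnp_mult_min_eq_clamp)
  have term_le: "k * ((Re (q$b))\<^sup>2 + (Im (q$b))\<^sup>2) - 2 * (Re (q$b) * Re (z$b) + Im (q$b) * Im (z$b))
      \<le> k * ((Re (y$b))\<^sup>2 + (Im (y$b))\<^sup>2) - 2 * (Re (y$b) * Re (z$b) + Im (y$b) * Im (z$b))" for b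
    using clamp_minimizes[of k "Re (y$b)" l "Re (z$b)"] clamp_minimizes[of k "Im (y$b)" l "Im (z$b)"]
      assms(1) y unfolding q k_def[symmetric] by (simp add: algebra_simps)
  have "k * (norm q)\<^sup>2 - 2 * (q \<bullet> z)
      = (\<Sum>b\<in>UNIV. k * ((Re (q$b))\<^sup>2 + (Im (q$b))\<^sup>2) - 2 * (Re (q$b) * Re (z$b) + Im (q$b) * Im (z$b)))"
    unfolding norm_power2_vec_complex inner_vec_complex by (simp add: sum_distrib_left sum_subtractf)
  also have "\<dots> \<le> (\<Sum>b\<in>UNIV. k * ((Re (y$b))\<^sup>2 + (Im (y$b))\<^sup>2) - 2 * (Re (y$b) * Re (z$b) + Im (y$b) * Im (z$b)))"
    by (intro sum_mono term_le)
  also have "\<dots> = k * (norm y)\<^sup>2 - 2 * (y \<bullet> z)"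
    unfolding norm_power2_vec_complex inner_vec_complex by (simp add: sum_distrib_left sum_subtractf)
  finally show ?thesis unfolding k_def .
qed

text \<open>First-order optimality: moving from the minimizer \<open>x\<close> towards \<open>y\<close> by \<open>s \<in> (0,1]\<close>
  changes the objective by \<open>s (2 (k x - z) \<bullet> (y - x) + s k \<parallel>y - x\<parallel>\<^sup>2)\<close>.\<close>

lemma quadratic_minimizer_variational_ineq:
  fixes C :: "'a::real_inner set"
  assumes "convex C" "x \<in> C" "y \<in> C" "0 \<le> k"
    and min: "\<And>w. w \<in> C \<Longrightarrow> k * (norm x)\<^sup>2 - 2 * (x \<bullet> z) \<le> k * (norm w)\<^sup>2 - 2 * (w \<bullet> z)"
  shows "0 \<le> (k *\<^sub>R x - z) \<bullet> (y - x)"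
proof -
  define d where "d = y - x"
  define a where "a = 2 * ((k *\<^sub>R x - z) \<bullet> d)"
  define b where "b = k * (norm d)\<^sup>2"
  have b: "0 \<le> b" unfolding b_def using assms(4) by simp
  have step: "0 \<le> a + s * b" if s: "0 < s" "s \<le> 1" for s
  proof -
    have "x + s *\<^sub>R d = (1 - s) *\<^sub>R x + s *\<^sub>R y"
      unfolding d_def by (simp add: algebra_simps)
    also have "\<dots> \<in> C" using convexD_alt[OF assms(1-3)] s by simp
    finally have "k * (norm x)\<^sup>2 - 2 * (x \<bullet> z) \<le> k * (norm (x + s *\<^sub>R d))\<^sup>2 - 2 * ((x + s *\<^sub>R d) \<bullet> z)"
      by (rule min)
    then have "0 \<le> s * (a + s * b)"
      unfolding a_def b_def power2_norm_eq_inner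
      by (simp add: inner_add inner_diff_left inner_commute algebra_simps power2_eq_square)
    then show ?thesis using s by (simp add: zero_le_mult_iff)
  qed
  have "0 \<le> a"
  proof (rule field_le_epsilon)
    fix e :: real assume "0 < e"
    define s where "s = min 1 (e / (b + 1))"
    have "0 < s" "s \<le> 1" using \<open>0 < e\<close> b by (auto simp: s_def)
    moreover have "s * b \<le> e"
    proof -
      have "s * b \<le> e / (b + 1) * b" using b by (intro mult_right_mono) (auto simp: s_def)
      also have "\<dots> \<le> e" using \<open>0 < e\<close> b by (simp add: field_simps)
      finally show ?thesis .
    qed
    ultimately show "0 \<le> a + e" using step by fastforce
  qed
  then show ?thesis unfolding a_def d_def by simp
qed

lemma prox_g_variational_ineq:
  fixes z :: "complex^'b"
  assumes "0 < 1 - tau * delta" "0 \<le> l" "y \<in> cbox_set l"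
  defines "q \<equiv> prox_g tau delta l z"
  shows "0 \<le> ((1 - tau * delta) *\<^sub>R q - z) \<bullet> (y - q)"
proof (rule quadratic_minimizer_variational_ineq[OF convex_cbox_set])
  show "q \<in> cbox_set l" unfolding q_def using assms(1,2) by (rule prox_g_in_cbox_set)
  show "(1 - tau * delta) * (norm q)\<^sup>2 - 2 * (q \<bullet> z) \<le> (1 - tau * delta) * (norm w)\<^sup>2 - 2 * (w \<bullet> z)"
    if "w \<in> cbox_set l" for w
    unfolding q_def using assms(1) that by (rule prox_g_minimizes)
qed (use assms in auto)

section \<open>One step of C2PO\<close>

definition c2po_step :: "complex^'b^'u \<Rightarrow> real \<Rightarrow> real \<Rightarrow> real \<Rightarrow> complex^'b \<Rightarrow> complex^'b" where
  "c2po_step A tau delta l v = prox_g tau delta l (v - complex_of_real tau *s ((cadj A ** A) *v v))"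

definition obj_quad :: "complex^'b^'u \<Rightarrow> real \<Rightarrow> complex^'b \<Rightarrow> real" where
  "obj_quad A delta v = (norm (A *v v))\<^sup>2 / 2 - delta / 2 * (norm v)\<^sup>2"

lemma objF_eq: "objF A delta l v = (if v \<in> cbox_set l then ereal (obj_quad A delta v) else \<infinity>)"
  unfolding objF_def obj_quad_def by simp

lemma c2po_step_in_cbox_set:
  "0 < 1 - tau * delta \<Longrightarrow> 0 \<le> l \<Longrightarrow> c2po_step A tau delta l v \<in> cbox_set l"
  unfolding c2po_step_def by (rule prox_g_in_cbox_set)

text \<open>Up to constants, \<open>q\<close> minimizes the model
  \<open>(M v - \<delta> v) \<bullet> (q - v) + (1 - \<tau>\<delta>) / (2\<tau>) \<parallel>q - v\<parallel>\<^sup>2\<close> (\<open>M = A\<^sup>H A\<close>) over the box;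
  comparing with \<open>q = v\<close> and bounding the curvature \<open>d \<bullet> M d\<close> by \<open>\<parallel>M\<parallel> \<parallel>d\<parallel>\<^sup>2\<close>
  gives the decrease.\<close>

lemma c2po_step_descent:
  fixes A :: "complex^'b^'u"
  assumes "0 < tau" "0 < 1 - tau * delta" "v \<in> cbox_set l"
  defines "q \<equiv> c2po_step A tau delta l v"
  shows "obj_quad A delta q
    \<le> obj_quad A delta v - (1 - tau * onorm (\<lambda>w. (cadj A ** A) *v w)) / (2 * tau) * (norm (q - v))\<^sup>2"
proof -
  define M where "M = cadj A ** A"
  define L where "L = onorm (\<lambda>w. M *v w)"
  define z where "z = v - tau *\<^sub>R (M *v v)"
  define d where "d = q - v"
  have q: "q = v + d" unfolding d_def by simp
  have "(1 - tau * delta) * (norm q)\<^sup>2 - 2 * (q \<bullet> z) \<le> (1 - tau * delta) * (norm v)\<^sup>2 - 2 * (v \<bullet> z)"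
    unfolding q_def c2po_step_def vector_smult_of_real z_def M_def
    by (rule prox_g_minimizes[OF assms(2,3)])
  then have model: "2 * tau * (d \<bullet> (M *v v) - delta * (d \<bullet> v)) \<le> - (1 - tau * delta) * (norm d)\<^sup>2"
    unfolding q z_def power2_norm_eq_inner
    by (simp add: inner_add inner_diff_right inner_commute algebra_simps)
  have curv: "d \<bullet> (M *v d) \<le> L * (norm d)\<^sup>2"
    unfolding L_def by (rule inner_le_onorm_mult_power2[OF matrix_vector_mul_bounded_linear])
  have "obj_quad A delta q
      = obj_quad A delta v + (d \<bullet> (M *v v) - delta * (d \<bullet> v)) + (d \<bullet> (M *v d) - delta * (norm d)\<^sup>2) / 2"
  proof -
    have "(norm (v + d))\<^sup>2 = (norm v)\<^sup>2 + 2 * (d \<bullet> v) + (norm d)\<^sup>2"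
      by (simp add: power2_norm_eq_inner inner_add inner_commute)
    then show ?thesis
      unfolding obj_quad_def q M_def norm_matrix_vector_add_power2 by (simp add: field_simps)
  qed
  also have "\<dots> \<le> obj_quad A delta v - (1 - tau * delta) / (2 * tau) * (norm d)\<^sup>2
                   + (L * (norm d)\<^sup>2 - delta * (norm d)\<^sup>2) / 2"
    using model curv assms(1) by (intro add_mono) (simp_all add: field_simps)
  also have "\<dots> = obj_quad A delta v - (1 - tau * L) / (2 * tau) * (norm d)\<^sup>2"
    using assms(1) by (simp add: field_simps)
  finally show ?thesis unfolding d_def L_def M_def .
qed

lemma objF_c2po_step_le:
  fixes A :: "complex^'b^'u"
  assumes "0 < tau" "0 < 1 - tau * delta" "tau * onorm (\<lambda>w. (cadj A ** A) *v w) < 1" "0 \<le> l"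
  shows "objF A delta l (c2po_step A tau delta l v) \<le> objF A delta l v"
proof (cases "v \<in> cbox_set l")
  case True
  have "0 \<le> (1 - tau * onorm (\<lambda>w. (cadj A ** A) *v w)) / (2 * tau)
                 * (norm (c2po_step A tau delta l v - v))\<^sup>2"
    using assms(1,3) by simp
  then have "obj_quad A delta (c2po_step A tau delta l v) \<le> obj_quad A delta v"
    using c2po_step_descent[OF assms(1,2) True, of A] by linarith
  then show ?thesis using True c2po_step_in_cbox_set[OF assms(2,4)] by (simp add: objF_eq)
qed (simp add: objF_eq)

section \<open>Convergence to stationary points\<close>

lemma successive_differences_tendsto_zero:
  fixes x :: "nat \<Rightarrow> 'a::real_normed_vector" and psi :: "nat \<Rightarrow> real"
  assumes "0 < c" "\<And>n. B \<le> psi n"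
    and decrease: "\<And>n. psi (Suc n) \<le> psi n - c * (norm (x (Suc n) - x n))\<^sup>2"
  shows "(\<lambda>n. x (Suc n) - x n) \<longlonglongrightarrow> 0"
proof -
  have gap: "(norm (x (Suc n) - x n))\<^sup>2 \<le> (psi n - psi (Suc n)) / c" for n
    using decrease[of n] \<open>0 < c\<close> by (simp add: pos_le_divide_eq mult.commute)
  have "decseq psi"
  proof (rule decseq_SucI)
    fix n
    have "0 \<le> c * (norm (x (Suc n) - x n))\<^sup>2" using \<open>0 < c\<close> by simp
    with decrease[of n] show "psi (Suc n) \<le> psi n" by linarith
  qed
  then obtain P where "psi \<longlonglongrightarrow> P"
    using decseq_convergent[of psi B] assms(2) by blast
  then have "(\<lambda>n. (psi n - psi (Suc n)) / c) \<longlonglongrightarrow> (P - P) / c"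
    using \<open>0 < c\<close> by (intro tendsto_intros LIMSEQ_Suc[of psi]) auto
  then have gap_lim: "(\<lambda>n. (psi n - psi (Suc n)) / c) \<longlonglongrightarrow> 0" by simp
  have "(\<lambda>n. (norm (x (Suc n) - x n))\<^sup>2) \<longlonglongrightarrow> 0"
  proof (rule real_tendsto_sandwich[OF _ _ tendsto_const gap_lim])
    show "\<forall>\<^sub>F n in sequentially. (norm (x (Suc n) - x n))\<^sup>2 \<le> (psi n - psi (Suc n)) / c"
      using gap by simp
  qed simp_all
  then have "(\<lambda>n. sqrt ((norm (x (Suc n) - x n))\<^sup>2)) \<longlonglongrightarrow> sqrt 0"
    by (rule tendsto_real_sqrt)
  then show ?thesis by (simp add: tendsto_norm_zero_iff)
qed

lemma c2po_successive_differences_tendsto_zero: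
  fixes A :: "complex^'b^'u"
  assumes "0 < tau" "0 < 1 - tau * delta" "tau * onorm (\<lambda>w. (cadj A ** A) *v w) < 1"
    and box: "\<And>n. v n \<in> cbox_set l"
    and iter: "\<And>n. v (Suc n) = c2po_step A tau delta l (v n)"
  shows "(\<lambda>n. v (Suc n) - v n) \<longlonglongrightarrow> 0"
proof -
  define c where "c = (1 - tau * onorm (\<lambda>w. (cadj A ** A) *v w)) / (2 * tau)"
  have "0 < c" unfolding c_def using assms(1,3) by simp
  moreover have "- (\<bar>delta\<bar> / 2 * (real CARD('b) * (2 * l\<^sup>2))) \<le> obj_quad A delta (v n)" for n
  proof -
    have "delta / 2 * (norm (v n))\<^sup>2 \<le> \<bar>delta\<bar> / 2 * (norm (v n))\<^sup>2"
      by (intro mult_right_mono) auto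
    also have "\<dots> \<le> \<bar>delta\<bar> / 2 * (real CARD('b) * (2 * l\<^sup>2))"
      by (intro mult_left_mono norm_power2_le_if_in_cbox_set box) auto
    finally show ?thesis unfolding obj_quad_def using zero_le_power2[of "norm (A *v v n)"] by linarith
  qed
  moreover have "obj_quad A delta (v (Suc n)) \<le> obj_quad A delta (v n) - c * (norm (v (Suc n) - v n))\<^sup>2" for n
    using c2po_step_descent[OF assms(1,2) box[of n], of A] unfolding iter[of n] c_def .
  ultimately show ?thesis by (rule successive_differences_tendsto_zero)
qed

lemma stationary_if_c2po_step_limit:
  fixes A :: "complex^'b^'u"
  assumes "0 < tau" "0 < 1 - tau * delta" "0 \<le> l"
    and lim: "v \<longlonglongrightarrow> xs" "(\<lambda>n. c2po_step A tau delta l (v n)) \<longlonglongrightarrow> xs"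
  shows "stationary A delta l xs"
  unfolding stationary_def
proof (intro conjI ballI)
  define M where "M = cadj A ** A"
  show xs: "xs \<in> cbox_set l"
    by (intro Lim_in_closed_set[OF closed_cbox_set _ sequentially_bot lim(2)] always_eventually allI
        c2po_step_in_cbox_set assms(2,3))
  fix y :: "complex^'b" assume y: "y \<in> cbox_set l"
  have "(\<lambda>n. ((1 - tau * delta) *\<^sub>R c2po_step A tau delta l (v n) - (v n - tau *\<^sub>R (M *v v n)))
               \<bullet> (y - c2po_step A tau delta l (v n)))
        \<longlonglongrightarrow> ((1 - tau * delta) *\<^sub>R xs - (xs - tau *\<^sub>R (M *v xs))) \<bullet> (y - xs)"
    by (intro tendsto_intros lim bounded_linear.tendsto[OF matrix_vector_mul_bounded_linear])
  moreover have "0 \<le> ((1 - tau * delta) *\<^sub>R c2po_step A tau delta l (v n) - (v n - tau *\<^sub>R (M *v v n)))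
               \<bullet> (y - c2po_step A tau delta l (v n))" for n
    unfolding c2po_step_def M_def vector_smult_of_real
    by (rule prox_g_variational_ineq[OF assms(2,3) y])
  ultimately have "0 \<le> ((1 - tau * delta) *\<^sub>R xs - (xs - tau *\<^sub>R (M *v xs))) \<bullet> (y - xs)"
    by (intro tendsto_lowerbound) auto
  also have "\<dots> = tau * ((M *v xs - delta *\<^sub>R xs) \<bullet> (y - xs))"
    by (simp add: algebra_simps inner_diff_left)
  finally show "cinner (- ((cadj A ** A) *v xs - delta *\<^sub>R xs)) (y - xs) \<le> 0"
    using assms(1) unfolding cinner_eq_inner M_def by (simp add: zero_le_mult_iff inner_diff_left)
qed

lemma stationary_if_c2po_limit_point:
  fixes A :: "complex^'b^'u" and x :: "nat \<Rightarrow> complex^'b"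
  assumes "0 < tau" "0 < 1 - tau * delta" "tau * onorm (\<lambda>w. (cadj A ** A) *v w) < 1" "0 \<le> l"
    and iter: "\<And>t. m \<le> t \<Longrightarrow> x (Suc t) = c2po_step A tau delta l (x t)"
    and r: "strict_mono r" and lim: "(x \<circ> r) \<longlonglongrightarrow> xs"
  shows "stationary A delta l xs"
proof -
  have "(\<lambda>n. x (Suc n + Suc m) - x (n + Suc m)) \<longlonglongrightarrow> 0"
  proof (rule c2po_successive_differences_tendsto_zero[OF assms(1-3)])
    show "x (n + Suc m) \<in> cbox_set l" for n
      using iter[of "n + m"] c2po_step_in_cbox_set[OF assms(2,4)] by simp
    show "x (Suc n + Suc m) = c2po_step A tau delta l (x (n + Suc m))" for n
      using iter[of "n + Suc m"] by simp
  qed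
  then have "(\<lambda>n. x (Suc n) - x n) \<longlonglongrightarrow> 0"
    using LIMSEQ_offset[where f="\<lambda>n. x (Suc n) - x n" and k="Suc m"] by simp
  then have "(\<lambda>n. x (Suc (r n)) - x (r n)) \<longlonglongrightarrow> 0"
    using LIMSEQ_subseq_LIMSEQ[OF _ r] by (simp add: comp_def)
  moreover have xr: "(\<lambda>n. x (r n)) \<longlonglongrightarrow> xs" using lim by (simp add: comp_def)
  ultimately have "(\<lambda>n. x (r n) + (x (Suc (r n)) - x (r n))) \<longlonglongrightarrow> xs + 0"
    by (intro tendsto_add)
  then have "(\<lambda>n. x (Suc (r n))) \<longlonglongrightarrow> xs" by simp
  moreover have "\<forall>\<^sub>F n in sequentially. x (Suc (r n)) = c2po_step A tau delta l (x (r n))"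
    using seq_suble[OF r] by (intro eventually_sequentiallyI[of m] iter) (metis le_trans)
  ultimately have "(\<lambda>n. c2po_step A tau delta l (x (r n))) \<longlonglongrightarrow> xs"
    by (rule Lim_transform_eventually)
  with xr show ?thesis by (rule stationary_if_c2po_step_limit[OF assms(1,2,4)])
qed

theorem theorem2:
  fixes H :: "complex ^ 'b ^ 'u" and s :: "complex ^ 'u"
    and P delta tau :: real and x :: "nat \<Rightarrow> complex ^ 'b"
  assumes "CARD('u) \<le> CARD('b)"
    and "P > 0" and "s \<noteq> 0"
    and "delta > 0" and "tau > 0"
    and "tau * onorm (\<lambda>v. (cadj (projQ s ** H) ** (projQ s ** H)) *v v) < 1"
    and "tau * delta < 1"
    and "x 1 = cadj H *v s"
    and "\<forall>t\<ge>1. x (Suc t) = prox_g tau delta (sqrt (P / (2 * real CARD('b))))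
           (x t - complex_of_real tau *s ((cadj (projQ s ** H) ** (projQ s ** H)) *v x t))"
  shows "(\<forall>t\<ge>1. objF (projQ s ** H) delta (sqrt (P / (2 * real CARD('b)))) (x (Suc t))
                 \<le> objF (projQ s ** H) delta (sqrt (P / (2 * real CARD('b)))) (x t))
       \<and> (\<forall>xs r. strict_mono r \<and> (x \<circ> r) \<longlonglongrightarrow> xs \<longrightarrow>
            stationary (projQ s ** H) delta (sqrt (P / (2 * real CARD('b)))) xs)"
proof -
  define A where "A = projQ s ** H"
  define l where "l = sqrt (P / (2 * real CARD('b)))"
  have k: "0 < 1 - tau * delta" and l: "0 \<le> l"
    using assms(2,7) unfolding l_def by simp_all
  have L: "tau * onorm (\<lambda>w. (cadj A ** A) *v w) < 1"
    using assms(6) unfolding A_def .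
  have iter: "x (Suc t) = c2po_step A tau delta l (x t)" if "1 \<le> t" for t
    using assms(9) that unfolding c2po_step_def A_def l_def by simp
  have "objF A delta l (x (Suc t)) \<le> objF A delta l (x t)" if "1 \<le> t" for t
    unfolding iter[OF that] by (rule objF_c2po_step_le[OF assms(5) k L l])
  moreover have "stationary A delta l xs" if "strict_mono r" "(x \<circ> r) \<longlonglongrightarrow> xs" for r xs
    using iter that by (rule stationary_if_c2po_limit_point[OF assms(5) k L l])
  ultimately show ?thesis unfolding A_def l_def by blast
qed

end
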